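(* Let $A$ be an artinian local ring with infinite residue field, $S$ a finitely generated standard $\mathbb N^d$-graded algebra over $A$, and let $0\to M'\to M\to M''\to0$ be an exact sequence of finitely generated $\mathbb N^d$-graded $S$-modules. Let $\mathbf x$ be a sequence of elements in $\bigcup_{i=1}^dS_i$. Then $\mathbf x$ is a mixed multiplicity system of $M$ if and only if $\mathbf x$ is a mixed multiplicity system of both $M'$ and $M''$.
   Context: $S$ standard: $S_{\mathbf 0}=A$, generated by $S_i:=S_{\mathbf e_i}$. $S_{++}=\bigoplus_{\mathbf n\ge\mathbf 1}S_{\mathbf n}$; for a graded module $F$, $\mathrm{Supp}_{++}F$ is the set of homogeneous primes $P$ of $S$ not containing $S_{++}$ with $F_P\ne0$ (dimension $-\infty$ if empty). A sequence $\mathbf x$ of elements of $\bigcup_jS_j$ is a mixed multiplicity system of $F$ if $\dim\mathrm{Supp}_{++}(F/\mathbf xF)\le0$ (with $\mathbf xF=0$ for empty $\mathbf x$). *)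

theory Defs
  imports "HOL-Algebra.Algebra"
begin

text \<open>Multidegrees in N^d are functions 'd => nat for a finite index type 'd (d = CARD('d)).\<close>

definition unitdeg :: "'d \<Rightarrow> ('d \<Rightarrow> nat)" where
  "unitdeg i = (\<lambda>j. if j = i then 1 else 0)"

definition degadd :: "('d \<Rightarrow> nat) \<Rightarrow> ('d \<Rightarrow> nat) \<Rightarrow> ('d \<Rightarrow> nat)" where
  "degadd m n = (\<lambda>i. m i + n i)"

definition graded_decomp :: "('a, 'm) ring_scheme \<Rightarrow> (('d::finite \<Rightarrow> nat) \<Rightarrow> 'a set) \<Rightarrow> bool" where
  "graded_decomp R G \<longleftrightarrow> (\<forall>n. additive_subgroup (G n) R) \<and>
     (\<forall>x\<in>carrier R. \<exists>!c. (\<forall>n. c n \<in> G n) \<and> finite {n. c n \<noteq> \<zero>\<^bsub>R\<^esub>}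
        \<and> x = finsum R c {n. c n \<noteq> \<zero>\<^bsub>R\<^esub>})"

definition hcomp :: "('a, 'm) ring_scheme \<Rightarrow> (('d::finite \<Rightarrow> nat) \<Rightarrow> 'a set) \<Rightarrow> ('d \<Rightarrow> nat) \<Rightarrow> 'a \<Rightarrow> 'a" where
  "hcomp R G n x = (THE c. (\<forall>n. c n \<in> G n) \<and> finite {n. c n \<noteq> \<zero>\<^bsub>R\<^esub>}
        \<and> x = finsum R c {n. c n \<noteq> \<zero>\<^bsub>R\<^esub>}) n"

definition graded_ring :: "'a ring \<Rightarrow> (('d::finite \<Rightarrow> nat) \<Rightarrow> 'a set) \<Rightarrow> bool" where
  "graded_ring S SG \<longleftrightarrow> cring S \<and> graded_decomp S SG \<and> \<one>\<^bsub>S\<^esub> \<in> SG (\<lambda>_. 0) \<and>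
     (\<forall>m n. \<forall>a\<in>SG m. \<forall>b\<in>SG n. a \<otimes>\<^bsub>S\<^esub> b \<in> SG (degadd m n))"

definition deg0_ring :: "'a ring \<Rightarrow> (('d::finite \<Rightarrow> nat) \<Rightarrow> 'a set) \<Rightarrow> 'a ring" where
  "deg0_ring S SG = S\<lparr>carrier := SG (\<lambda>_. 0)\<rparr>"

definition standard_graded :: "'a ring \<Rightarrow> (('d::finite \<Rightarrow> nat) \<Rightarrow> 'a set) \<Rightarrow> bool" where
  "standard_graded S SG \<longleftrightarrow> graded_ring S SG \<and>
     carrier S = generate_ring S (SG (\<lambda>_. 0) \<union> (\<Union>i. SG (unitdeg i)))"

definition fg_algebra_over_deg0 :: "'a ring \<Rightarrow> (('d::finite \<Rightarrow> nat) \<Rightarrow> 'a set) \<Rightarrow> bool" where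
  "fg_algebra_over_deg0 S SG \<longleftrightarrow>
     (\<exists>Gs. finite Gs \<and> Gs \<subseteq> carrier S \<and> carrier S = generate_ring S (SG (\<lambda>_. 0) \<union> Gs))"

definition artinian :: "('a, 'm) ring_scheme \<Rightarrow> bool" where
  "artinian R \<longleftrightarrow> (\<forall>f :: nat \<Rightarrow> 'a set. (\<forall>n. ideal (f n) R) \<and> (\<forall>n. f (Suc n) \<subseteq> f n)
       \<longrightarrow> (\<exists>N. \<forall>n\<ge>N. f n = f N))"

definition local_ring :: "('a, 'm) ring_scheme \<Rightarrow> bool" where
  "local_ring R \<longleftrightarrow> cring R \<and> (\<exists>!m. maximalideal m R)"

definition infinite_residue_field :: "('a, 'm) ring_scheme \<Rightarrow> bool" where
  "infinite_residue_field R \<longleftrightarrow> (\<forall>m. maximalideal m R \<longrightarrow> infinite (carrier (R Quot m)))"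

definition graded_module :: "'a ring \<Rightarrow> (('d::finite \<Rightarrow> nat) \<Rightarrow> 'a set)
    \<Rightarrow> ('a, 'b) module \<Rightarrow> (('d \<Rightarrow> nat) \<Rightarrow> 'b set) \<Rightarrow> bool" where
  "graded_module S SG M MG \<longleftrightarrow> module S M \<and> graded_decomp M MG \<and>
     (\<forall>m n. \<forall>a\<in>SG m. \<forall>x\<in>MG n. a \<odot>\<^bsub>M\<^esub> x \<in> MG (degadd m n))"

definition fg_module :: "'a ring \<Rightarrow> ('a, 'b) module \<Rightarrow> bool" where
  "fg_module S M \<longleftrightarrow> (\<exists>Gs. finite Gs \<and> Gs \<subseteq> carrier M \<and>
     carrier M = {finsum M (\<lambda>x. a x \<odot>\<^bsub>M\<^esub> x) Gs | a. a \<in> Gs \<rightarrow> carrier S})"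

definition graded_hom :: "'a ring \<Rightarrow> ('a, 'b) module \<Rightarrow> (('d \<Rightarrow> nat) \<Rightarrow> 'b set)
    \<Rightarrow> ('a, 'c) module \<Rightarrow> (('d \<Rightarrow> nat) \<Rightarrow> 'c set) \<Rightarrow> ('b \<Rightarrow> 'c) \<Rightarrow> bool" where
  "graded_hom S M MG N NG f \<longleftrightarrow> f \<in> carrier M \<rightarrow> carrier N \<and>
     (\<forall>x\<in>carrier M. \<forall>y\<in>carrier M. f (x \<oplus>\<^bsub>M\<^esub> y) = f x \<oplus>\<^bsub>N\<^esub> f y) \<and>
     (\<forall>a\<in>carrier S. \<forall>x\<in>carrier M. f (a \<odot>\<^bsub>M\<^esub> x) = a \<odot>\<^bsub>N\<^esub> f x) \<and>
     (\<forall>n. f ` MG n \<subseteq> NG n)"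

definition short_exact :: "('a, 'b) module \<Rightarrow> ('a, 'c) module \<Rightarrow> ('a, 'e) module
    \<Rightarrow> ('b \<Rightarrow> 'c) \<Rightarrow> ('c \<Rightarrow> 'e) \<Rightarrow> bool" where
  "short_exact M1 M M2 f g \<longleftrightarrow> inj_on f (carrier M1) \<and> g ` carrier M = carrier M2 \<and>
     f ` carrier M1 = {y \<in> carrier M. g y = \<zero>\<^bsub>M2\<^esub>}"

definition homog_ideal :: "'a ring \<Rightarrow> (('d::finite \<Rightarrow> nat) \<Rightarrow> 'a set) \<Rightarrow> 'a set \<Rightarrow> bool" where
  "homog_ideal S SG I \<longleftrightarrow> ideal I S \<and> (\<forall>x\<in>I. \<forall>n. hcomp S SG n x \<in> I)"

text \<open>S_{++} = direct sum of the S_n with n >= 1 (all coordinates positive).\<close>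
definition S_pp :: "'a ring \<Rightarrow> (('d::finite \<Rightarrow> nat) \<Rightarrow> 'a set) \<Rightarrow> 'a set" where
  "S_pp S SG = {x \<in> carrier S. \<forall>n. (\<exists>i. n i = 0) \<longrightarrow> hcomp S SG n x = \<zero>\<^bsub>S\<^esub>}"

definition seq_submod :: "'a ring \<Rightarrow> ('a, 'b) module \<Rightarrow> 'a list \<Rightarrow> 'b set" where
  "seq_submod S F xs = {finsum F (\<lambda>k. (xs ! k) \<odot>\<^bsub>F\<^esub> m k) {..<length xs} | m.
       m \<in> {..<length xs} \<rightarrow> carrier F}"

text \<open>Supp_{++}(F/N): homogeneous primes P not containing S_{++} with (F/N)_P nonzero,
  where (F/N)_P nonzero is unfolded as: some class [m] survives localisation,
  i.e. s m is not in N for every s outside P.\<close>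
definition supp_pp_quot :: "'a ring \<Rightarrow> (('d::finite \<Rightarrow> nat) \<Rightarrow> 'a set) \<Rightarrow> ('a, 'b) module
    \<Rightarrow> 'b set \<Rightarrow> 'a set set" where
  "supp_pp_quot S SG F N = {P. primeideal P S \<and> homog_ideal S SG P \<and> \<not> S_pp S SG \<subseteq> P \<and>
      (\<exists>m\<in>carrier F. \<forall>s\<in>carrier S - P. s \<odot>\<^bsub>F\<^esub> m \<notin> N)}"

text \<open>Krull dimension of a set of primes is at most k: every strict chain
  P_0 < ... < P_n inside it has length n <= k (the empty set has dimension -infinity).\<close>
definition dim_le :: "'a set set \<Rightarrow> nat \<Rightarrow> bool" where
  "dim_le Ps k \<longleftrightarrow> (\<forall>(c :: nat \<Rightarrow> 'a set) n. (\<forall>i\<le>n. c i \<in> Ps) \<and> (\<forall>i<n. c i \<subset> c (Suc i)) \<longrightarrow> n \<le> k)"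

definition mm_system :: "'a ring \<Rightarrow> (('d::finite \<Rightarrow> nat) \<Rightarrow> 'a set) \<Rightarrow> ('a, 'b) module
    \<Rightarrow> 'a list \<Rightarrow> bool" where
  "mm_system S SG F xs \<longleftrightarrow> dim_le (supp_pp_quot S SG F (seq_submod S F xs)) 0"

end

theory Submission
  imports Defs
begin

text \<open>For \<open>0 \<rightarrow> M' \<rightarrow> M \<rightarrow> M'' \<rightarrow> 0\<close> the support of
  \<open>M/xM\<close> is the union of those of \<open>M'/xM'\<close> and \<open>M''/xM''\<close>: the inclusion of the
  \<open>M''\<close>-part is immediate from surjectivity, the reverse inclusion is a diagram chase, and the
  inclusion of the \<open>M'\<close>-part uses Nakayama's lemma at \<open>P\<close> for the finitely generated \<open>M\<close>
  (if \<open>(M/xM)\<^sub>P = 0\<close> and \<open>x \<subseteq> P\<close> then \<open>M\<^sub>P = 0\<close>, so \<open>M'\<^sub>P = 0\<close>). Every one of these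
  supports is closed under passing to larger primes of the support of \<open>M/xM\<close>, so the union has
  no strict inclusions iff neither part has one, which is dimension at most \<open>0\<close>.\<close>

section \<open>The submodule \<open>xF\<close>\<close>

text \<open>\<open>seq_submod\<close>, \<open>fg_module\<close> and \<open>supp_pp_quot\<close> are stated for module records rather
  than module schemes, so the module locale is specialised accordingly.\<close>

locale plain_module = module R M for R :: "'a ring" (structure) and M :: "('a, 'b) module"

context plain_module
begin

lemma seq_submodI:
  assumes "m \<in> {..<length xs} \<rightarrow> carrier M"
  shows "finsum M (\<lambda>k. (xs ! k) \<odot>\<^bsub>M\<^esub> m k) {..<length xs} \<in> seq_submod R M xs"
  unfolding seq_submod_def using assms by blast

lemma seq_submodE:
  assumes "v \<in> seq_submod R M xs"
  obtains m where "m \<in> {..<length xs} \<rightarrow> carrier M"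
    and "v = finsum M (\<lambda>k. (xs ! k) \<odot>\<^bsub>M\<^esub> m k) {..<length xs}"
  using assms unfolding seq_submod_def by blast

lemma seq_submod_subset:
  assumes "set xs \<subseteq> carrier R"
  shows "seq_submod R M xs \<subseteq> carrier M"
proof
  fix v assume "v \<in> seq_submod R M xs"
  then obtain m where "m \<in> {..<length xs} \<rightarrow> carrier M"
    and "v = finsum M (\<lambda>k. (xs ! k) \<odot>\<^bsub>M\<^esub> m k) {..<length xs}"
    by (rule seq_submodE)
  moreover have "\<And>k. k < length xs \<Longrightarrow> xs ! k \<in> carrier R" using assms by auto
  ultimately show "v \<in> carrier M" by (auto intro!: finsum_closed)
qed

lemma zero_in_seq_submod:
  assumes "set xs \<subseteq> carrier R"
  shows "\<zero>\<^bsub>M\<^esub> \<in> seq_submod R M xs"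
proof -
  have "\<And>k. k < length xs \<Longrightarrow> xs ! k \<in> carrier R" using assms by auto
  then have "finsum M (\<lambda>k. (xs ! k) \<odot>\<^bsub>M\<^esub> \<zero>\<^bsub>M\<^esub>) {..<length xs} = \<zero>\<^bsub>M\<^esub>"
    by (intro M.add.finprod_one_eqI) auto
  then show ?thesis using seq_submodI[of "\<lambda>_. \<zero>\<^bsub>M\<^esub>" xs] by simp
qed

lemma add_in_seq_submod:
  assumes "set xs \<subseteq> carrier R" "v \<in> seq_submod R M xs" "w \<in> seq_submod R M xs"
  shows "v \<oplus>\<^bsub>M\<^esub> w \<in> seq_submod R M xs"
proof -
  obtain m where m: "m \<in> {..<length xs} \<rightarrow> carrier M"
    and v: "v = finsum M (\<lambda>k. (xs ! k) \<odot>\<^bsub>M\<^esub> m k) {..<length xs}"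
    using assms(2) by (rule seq_submodE)
  obtain m' where m': "m' \<in> {..<length xs} \<rightarrow> carrier M"
    and w: "w = finsum M (\<lambda>k. (xs ! k) \<odot>\<^bsub>M\<^esub> m' k) {..<length xs}"
    using assms(3) by (rule seq_submodE)
  have x: "\<And>k. k < length xs \<Longrightarrow> xs ! k \<in> carrier R" using assms(1) by auto
  have "v \<oplus>\<^bsub>M\<^esub> w = finsum M (\<lambda>k. (xs ! k) \<odot>\<^bsub>M\<^esub> m k \<oplus>\<^bsub>M\<^esub> (xs ! k) \<odot>\<^bsub>M\<^esub> m' k) {..<length xs}"
    unfolding v w using m m' x by (subst M.finsum_addf) (auto intro!: smult_closed)
  also have "\<dots> = finsum M (\<lambda>k. (xs ! k) \<odot>\<^bsub>M\<^esub> (m k \<oplus>\<^bsub>M\<^esub> m' k)) {..<length xs}"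
    using m m' x by (intro M.finsum_cong') (auto simp: smult_r_distr Pi_iff)
  finally show ?thesis using seq_submodI[of "\<lambda>k. m k \<oplus>\<^bsub>M\<^esub> m' k" xs] m m' by auto
qed

lemma smult_in_seq_submod:
  assumes "set xs \<subseteq> carrier R" "a \<in> carrier R" "v \<in> seq_submod R M xs"
  shows "a \<odot>\<^bsub>M\<^esub> v \<in> seq_submod R M xs"
proof -
  obtain m where m: "m \<in> {..<length xs} \<rightarrow> carrier M"
    and v: "v = finsum M (\<lambda>k. (xs ! k) \<odot>\<^bsub>M\<^esub> m k) {..<length xs}"
    using assms(3) by (rule seq_submodE)
  have x: "\<And>k. k < length xs \<Longrightarrow> xs ! k \<in> carrier R" using assms(1) by auto
  have "a \<odot>\<^bsub>M\<^esub> v = finsum M (\<lambda>k. a \<odot>\<^bsub>M\<^esub> ((xs ! k) \<odot>\<^bsub>M\<^esub> m k)) {..<length xs}"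
    unfolding v using m x assms(2) by (subst finsum_smult_ldistr) auto
  also have "\<dots> = finsum M (\<lambda>k. (xs ! k) \<odot>\<^bsub>M\<^esub> (a \<odot>\<^bsub>M\<^esub> m k)) {..<length xs}"
  proof (intro M.finsum_cong')
    fix k assume "k \<in> {..<length xs}"
    with m x have "xs ! k \<in> carrier R" "m k \<in> carrier M" by auto
    with assms(2) show "a \<odot>\<^bsub>M\<^esub> ((xs ! k) \<odot>\<^bsub>M\<^esub> m k) = (xs ! k) \<odot>\<^bsub>M\<^esub> (a \<odot>\<^bsub>M\<^esub> m k)"
      by (metis R.m_comm smult_assoc1)
  qed (use m x assms(2) in auto)
  finally show ?thesis using seq_submodI[of "\<lambda>k. a \<odot>\<^bsub>M\<^esub> m k" xs] m assms(2) by auto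
qed

lemma nth_smult_in_seq_submod:
  assumes "set xs \<subseteq> carrier R" "i < length xs" "v \<in> carrier M"
  shows "(xs ! i) \<odot>\<^bsub>M\<^esub> v \<in> seq_submod R M xs"
proof -
  have x: "\<And>k. k < length xs \<Longrightarrow> xs ! k \<in> carrier R" using assms(1) by auto
  have "finsum M (\<lambda>k. (xs ! k) \<odot>\<^bsub>M\<^esub> (if k = i then v else \<zero>\<^bsub>M\<^esub>)) {..<length xs}
      = finsum M (\<lambda>k. if i = k then (xs ! k) \<odot>\<^bsub>M\<^esub> v else \<zero>\<^bsub>M\<^esub>) {..<length xs}"
    using x assms by (intro M.finsum_cong') auto
  also have "\<dots> = (xs ! i) \<odot>\<^bsub>M\<^esub> v"
    using x assms by (intro M.finsum_singleton) auto
  finally show ?thesis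
    using seq_submodI[of "\<lambda>k. if k = i then v else \<zero>\<^bsub>M\<^esub>" xs] assms(3) by auto
qed

end

section \<open>Linear maps\<close>

locale linear_map = M: plain_module R M + N: plain_module R N
  for R :: "'a ring" and M :: "('a, 'b) module" and N :: "('a, 'c) module" +
  fixes h :: "'b \<Rightarrow> 'c"
  assumes map_closed: "h \<in> carrier M \<rightarrow> carrier N"
    and map_add: "\<And>x y. x \<in> carrier M \<Longrightarrow> y \<in> carrier M \<Longrightarrow> h (x \<oplus>\<^bsub>M\<^esub> y) = h x \<oplus>\<^bsub>N\<^esub> h y"
    and map_smult: "\<And>a x. a \<in> carrier R \<Longrightarrow> x \<in> carrier M \<Longrightarrow> h (a \<odot>\<^bsub>M\<^esub> x) = a \<odot>\<^bsub>N\<^esub> h x"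

lemma graded_hom_imp_linear_map:
  assumes "graded_hom S M MG N NG f" "module S M" "module S N"
  shows "linear_map S M N f"
  using assms unfolding graded_hom_def linear_map_def linear_map_axioms_def plain_module_def
  by blast

context linear_map
begin

lemma map_in_carrier: "x \<in> carrier M \<Longrightarrow> h x \<in> carrier N"
  using map_closed by blast

lemma map_zero: "h \<zero>\<^bsub>M\<^esub> = \<zero>\<^bsub>N\<^esub>"
  using map_smult[of "\<zero>\<^bsub>R\<^esub>" "\<zero>\<^bsub>M\<^esub>"] map_in_carrier[of "\<zero>\<^bsub>M\<^esub>"] by simp

lemma map_neg:
  assumes "x \<in> carrier M"
  shows "h (\<ominus>\<^bsub>M\<^esub> x) = \<ominus>\<^bsub>N\<^esub> h x"
  using map_smult[of "\<ominus>\<^bsub>R\<^esub> \<one>\<^bsub>R\<^esub>" x] map_in_carrier assms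
  by (simp add: M.smult_l_minus N.smult_l_minus)

lemma map_finsum:
  assumes "finite A" "f \<in> A \<rightarrow> carrier M"
  shows "h (finsum M f A) = finsum N (\<lambda>i. h (f i)) A"
  using assms
proof (induction A rule: finite_induct)
  case empty
  show ?case by (simp add: map_zero)
next
  case (insert a A)
  then have "h (finsum M f (insert a A)) = h (f a) \<oplus>\<^bsub>N\<^esub> h (finsum M f A)"
    by (simp add: M.finsum_insert map_add)
  also have "\<dots> = finsum N (\<lambda>i. h (f i)) (insert a A)"
    using insert map_closed by (subst N.finsum_insert) (auto simp: Pi_iff)
  finally show ?case .
qed

lemma map_seq_comb:
  assumes "set xs \<subseteq> carrier R" "m \<in> {..<length xs} \<rightarrow> carrier M"
  shows "h (finsum M (\<lambda>k. (xs ! k) \<odot>\<^bsub>M\<^esub> m k) {..<length xs})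
       = finsum N (\<lambda>k. (xs ! k) \<odot>\<^bsub>N\<^esub> h (m k)) {..<length xs}"
proof -
  have x: "\<And>k. k < length xs \<Longrightarrow> xs ! k \<in> carrier R" using assms(1) by auto
  have "h (finsum M (\<lambda>k. (xs ! k) \<odot>\<^bsub>M\<^esub> m k) {..<length xs})
      = finsum N (\<lambda>k. h ((xs ! k) \<odot>\<^bsub>M\<^esub> m k)) {..<length xs}"
    using x assms(2) by (intro map_finsum) auto
  also have "\<dots> = finsum N (\<lambda>k. (xs ! k) \<odot>\<^bsub>N\<^esub> h (m k)) {..<length xs}"
    using x assms(2) map_closed by (intro N.finsum_cong') (auto simp: map_smult Pi_iff)
  finally show ?thesis .
qed

lemma image_seq_submod_subset:
  assumes "set xs \<subseteq> carrier R"
  shows "h ` seq_submod R M xs \<subseteq> seq_submod R N xs"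
proof
  fix w assume "w \<in> h ` seq_submod R M xs"
  then obtain m where m: "m \<in> {..<length xs} \<rightarrow> carrier M"
    and w: "w = h (finsum M (\<lambda>k. (xs ! k) \<odot>\<^bsub>M\<^esub> m k) {..<length xs})"
    by (auto elim: M.seq_submodE)
  show "w \<in> seq_submod R N xs"
    unfolding w map_seq_comb[OF assms m] using m map_closed by (intro N.seq_submodI) auto
qed

lemma image_seq_submod:
  assumes "set xs \<subseteq> carrier R" "h ` carrier M = carrier N"
  shows "h ` seq_submod R M xs = seq_submod R N xs"
proof
  show "seq_submod R N xs \<subseteq> h ` seq_submod R M xs"
  proof
    fix w assume "w \<in> seq_submod R N xs"
    then obtain n where n: "n \<in> {..<length xs} \<rightarrow> carrier N"
      and w: "w = finsum N (\<lambda>k. (xs ! k) \<odot>\<^bsub>N\<^esub> n k) {..<length xs}"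
      by (rule N.seq_submodE)
    define m where "m k = inv_into (carrier M) h (n k)" for k
    have m: "m k \<in> carrier M" "h (m k) = n k" if "k < length xs" for k
    proof -
      have "n k \<in> h ` carrier M" using n that assms(2) by auto
      then show "m k \<in> carrier M" "h (m k) = n k"
        unfolding m_def by (simp_all add: inv_into_into f_inv_into_f)
    qed
    then have mc: "m \<in> {..<length xs} \<rightarrow> carrier M" by simp
    have x: "\<And>k. k < length xs \<Longrightarrow> xs ! k \<in> carrier R" using assms(1) by auto
    have "h (finsum M (\<lambda>k. (xs ! k) \<odot>\<^bsub>M\<^esub> m k) {..<length xs}) = w"
      unfolding map_seq_comb[OF assms(1) mc] w using m n x by (intro N.finsum_cong') (auto simp: Pi_iff)
    moreover have "finsum M (\<lambda>k. (xs ! k) \<odot>\<^bsub>M\<^esub> m k) {..<length xs} \<in> seq_submod R M xs"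
      using mc by (rule M.seq_submodI)
    ultimately show "w \<in> h ` seq_submod R M xs" using rev_image_eqI by metis
  qed
qed (rule image_seq_submod_subset[OF assms(1)])

end

section \<open>Nakayama's lemma at a prime ideal\<close>

lemma (in abelian_monoid) finsum_mem_closed:
  assumes "finite A" "\<And>i. i \<in> A \<Longrightarrow> f i \<in> L" "L \<subseteq> carrier G" "\<zero> \<in> L"
    "\<And>x y. x \<in> L \<Longrightarrow> y \<in> L \<Longrightarrow> x \<oplus> y \<in> L"
  shows "finsum G f A \<in> L"
  using assms(1,2)
proof (induction A rule: finite_induct)
  case (insert a A)
  then have "finsum G f (insert a A) = f a \<oplus> finsum G f A"
    using assms(3) by (intro finsum_insert) auto
  with insert assms(5) show ?case by simp
qed (simp add: assms(4))

text \<open>\<open>ideal_span M P G N\<close> is the submodule \<open>N + P G\<close>.\<close>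

inductive_set ideal_span :: "('a, 'b, 'm) module_scheme \<Rightarrow> 'a set \<Rightarrow> 'b set \<Rightarrow> 'b set \<Rightarrow> 'b set"
  for M P G N
where
  base: "n \<in> N \<Longrightarrow> n \<in> ideal_span M P G N"
| gen: "a \<in> P \<Longrightarrow> g \<in> G \<Longrightarrow> a \<odot>\<^bsub>M\<^esub> g \<in> ideal_span M P G N"
| add: "x \<in> ideal_span M P G N \<Longrightarrow> y \<in> ideal_span M P G N \<Longrightarrow> x \<oplus>\<^bsub>M\<^esub> y \<in> ideal_span M P G N"

definition plus_cyclic :: "('a, 'c) ring_scheme \<Rightarrow> ('a, 'b, 'm) module_scheme \<Rightarrow> 'b set \<Rightarrow> 'b \<Rightarrow> 'b set" where
  "plus_cyclic R M N g = {n \<oplus>\<^bsub>M\<^esub> t \<odot>\<^bsub>M\<^esub> g | n t. n \<in> N \<and> t \<in> carrier R}"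

context module
begin

lemma submodule_zero_closed:
  assumes "submodule N R M"
  shows "\<zero>\<^bsub>M\<^esub> \<in> N"
proof -
  note N = submoduleE[OF assms]
  obtain x where "x \<in> N" using N(2) by blast
  then have "x \<oplus>\<^bsub>M\<^esub> \<ominus>\<^bsub>M\<^esub> x \<in> N" using N(3,5) by blast
  with \<open>x \<in> N\<close> N(1) show ?thesis by (metis M.r_neg subsetD)
qed

lemma ideal_span_subset:
  assumes "P \<subseteq> carrier R" "G \<subseteq> carrier M" "N \<subseteq> carrier M"
  shows "ideal_span M P G N \<subseteq> carrier M"
proof
  fix x assume "x \<in> ideal_span M P G N"
  then show "x \<in> carrier M" by induct (use assms in auto)
qed

lemma ideal_span_mono:
  assumes "N \<subseteq> N'"
  shows "ideal_span M P G N \<subseteq> ideal_span M P G N'"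
proof
  fix x assume "x \<in> ideal_span M P G N"
  then show "x \<in> ideal_span M P G N'" by induct (use assms in \<open>auto intro: ideal_span.intros\<close>)
qed

lemma ideal_span_empty:
  assumes "submodule N R M"
  shows "ideal_span M P {} N = N"
proof
  show "ideal_span M P {} N \<subseteq> N"
  proof
    fix x assume "x \<in> ideal_span M P {} N"
    then show "x \<in> N" by induct (use submoduleE(5)[OF assms] in auto)
  qed
qed (auto intro: ideal_span.base)

lemma ideal_span_insertE:
  assumes "ideal P R" "G \<subseteq> carrier M" "g \<in> carrier M" "submodule N R M"
    "x \<in> ideal_span M P (insert g G) N"
  obtains a y where "a \<in> P" "y \<in> ideal_span M P G N" "x = a \<odot>\<^bsub>M\<^esub> g \<oplus>\<^bsub>M\<^esub> y"
proof -
  interpret P: ideal P R by fact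
  have N: "N \<subseteq> carrier M" "\<zero>\<^bsub>M\<^esub> \<in> N"
    using submoduleE(1)[OF assms(4)] submodule_zero_closed[OF assms(4)] by auto
  have span: "y \<in> carrier M" if "y \<in> ideal_span M P G N" for y
    using ideal_span_subset[OF P.a_subset assms(2) N(1)] that by blast
  have zero: "\<zero>\<^bsub>M\<^esub> \<in> ideal_span M P G N" using N(2) by (rule ideal_span.base)
  have zero_P: "\<zero> \<in> P" by (rule additive_subgroup.zero_closed[OF P.additive_subgroup_axioms])
  have "\<exists>a\<in>P. \<exists>y\<in>ideal_span M P G N. x = a \<odot>\<^bsub>M\<^esub> g \<oplus>\<^bsub>M\<^esub> y"
    using assms(5)
  proof induct
    case (base n)
    then have "n = \<zero> \<odot>\<^bsub>M\<^esub> g \<oplus>\<^bsub>M\<^esub> n" using N(1) assms(3) by auto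
    with base show ?case by (blast intro: ideal_span.base zero_P)
  next
    case (gen a h)
    show ?case
    proof (cases "h = g")
      case True
      then have "a \<odot>\<^bsub>M\<^esub> h = a \<odot>\<^bsub>M\<^esub> g \<oplus>\<^bsub>M\<^esub> \<zero>\<^bsub>M\<^esub>"
        using gen(1) P.a_subset assms(3) by auto
      with gen(1) zero show ?thesis by blast
    next
      case False
      with gen have h: "a \<odot>\<^bsub>M\<^esub> h \<in> ideal_span M P G N" by (auto intro: ideal_span.gen)
      then have "a \<odot>\<^bsub>M\<^esub> h = \<zero> \<odot>\<^bsub>M\<^esub> g \<oplus>\<^bsub>M\<^esub> a \<odot>\<^bsub>M\<^esub> h"
        using span assms(3) by simp
      with h show ?thesis by (blast intro: zero_P)
    qed
  next
    case (add x y)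
    then obtain a b x' y' where ab: "a \<in> P" "b \<in> P"
      and x'y': "x' \<in> ideal_span M P G N" "y' \<in> ideal_span M P G N"
      and xy: "x = a \<odot>\<^bsub>M\<^esub> g \<oplus>\<^bsub>M\<^esub> x'" "y = b \<odot>\<^bsub>M\<^esub> g \<oplus>\<^bsub>M\<^esub> y'" by blast
    have "a \<in> carrier R" "b \<in> carrier R" using ab P.a_subset by auto
    with x'y' span assms(3)
    have "x \<oplus>\<^bsub>M\<^esub> y = (a \<oplus> b) \<odot>\<^bsub>M\<^esub> g \<oplus>\<^bsub>M\<^esub> (x' \<oplus>\<^bsub>M\<^esub> y')"
      unfolding xy by (simp add: smult_l_distr M.a_ac)
    with ab x'y' show ?case by (blast intro: ideal_span.add P.a_closed)
  qed
  with that show thesis by blast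
qed

lemma mem_plus_cyclicI:
  "n \<in> N \<Longrightarrow> t \<in> carrier R \<Longrightarrow> n \<oplus>\<^bsub>M\<^esub> t \<odot>\<^bsub>M\<^esub> g \<in> plus_cyclic R M N g"
  unfolding plus_cyclic_def by blast

lemma subset_plus_cyclic:
  assumes "N \<subseteq> carrier M" "g \<in> carrier M"
  shows "N \<subseteq> plus_cyclic R M N g"
proof
  fix n assume n: "n \<in> N"
  with assms have "n = n \<oplus>\<^bsub>M\<^esub> \<zero> \<odot>\<^bsub>M\<^esub> g" by auto
  with n show "n \<in> plus_cyclic R M N g" by (metis R.zero_closed mem_plus_cyclicI)
qed

lemma ideal_span_insert_subset:
  assumes "ideal P R" "G \<subseteq> carrier M" "g \<in> carrier M" "submodule N R M"
  shows "ideal_span M P (insert g G) N \<subseteq> ideal_span M P G (plus_cyclic R M N g)"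
proof
  interpret P: ideal P R by fact
  have N: "N \<subseteq> carrier M" "\<zero>\<^bsub>M\<^esub> \<in> N"
    using submoduleE(1)[OF assms(4)] submodule_zero_closed[OF assms(4)] by auto
  fix x assume "x \<in> ideal_span M P (insert g G) N"
  then obtain a y where a: "a \<in> P" and y: "y \<in> ideal_span M P G N"
    and x: "x = a \<odot>\<^bsub>M\<^esub> g \<oplus>\<^bsub>M\<^esub> y"
    by (rule ideal_span_insertE[OF assms])
  have "y \<in> ideal_span M P G (plus_cyclic R M N g)"
    using ideal_span_mono[OF subset_plus_cyclic[OF N(1) assms(3)]] y by blast
  moreover have "a \<odot>\<^bsub>M\<^esub> g = \<zero>\<^bsub>M\<^esub> \<oplus>\<^bsub>M\<^esub> a \<odot>\<^bsub>M\<^esub> g"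
    using a P.a_subset assms(3) by auto
  then have "a \<odot>\<^bsub>M\<^esub> g \<in> plus_cyclic R M N g"
    using N(2) a P.a_subset by (metis mem_plus_cyclicI subsetD)
  ultimately show "x \<in> ideal_span M P G (plus_cyclic R M N g)"
    unfolding x by (blast intro: ideal_span.base ideal_span.add)
qed

lemma plus_cyclicE:
  assumes "x \<in> plus_cyclic R M N g"
  obtains n t where "n \<in> N" "t \<in> carrier R" "x = n \<oplus>\<^bsub>M\<^esub> t \<odot>\<^bsub>M\<^esub> g"
  using assms unfolding plus_cyclic_def by blast

lemma submodule_plus_cyclic:
  assumes "submodule N R M" "g \<in> carrier M"
  shows "submodule (plus_cyclic R M N g) R M"
proof -
  note N = submoduleE[OF assms(1)]
  have Nc: "n \<in> carrier M" if "n \<in> N" for n using N(1) that by blast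
  show ?thesis
  proof (rule submoduleI)
    show "plus_cyclic R M N g \<subseteq> carrier M"
      using Nc assms(2) by (auto elim!: plus_cyclicE)
    show "\<zero>\<^bsub>M\<^esub> \<in> plus_cyclic R M N g"
      using subset_plus_cyclic[OF N(1) assms(2)] submodule_zero_closed[OF assms(1)] by blast
  next
    fix x assume "x \<in> plus_cyclic R M N g"
    then obtain n t where nt: "n \<in> N" "t \<in> carrier R" and x: "x = n \<oplus>\<^bsub>M\<^esub> t \<odot>\<^bsub>M\<^esub> g"
      by (rule plus_cyclicE)
    have "\<ominus>\<^bsub>M\<^esub> x = \<ominus>\<^bsub>M\<^esub> n \<oplus>\<^bsub>M\<^esub> (\<ominus> t) \<odot>\<^bsub>M\<^esub> g"
      using nt Nc assms(2) unfolding x by (simp add: M.minus_add smult_l_minus)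
    then show "\<ominus>\<^bsub>M\<^esub> x \<in> plus_cyclic R M N g"
      using nt N(3) by (simp add: mem_plus_cyclicI)
  next
    fix x y assume "x \<in> plus_cyclic R M N g" "y \<in> plus_cyclic R M N g"
    then obtain n t n' t' where nt: "n \<in> N" "t \<in> carrier R" "n' \<in> N" "t' \<in> carrier R"
      and xy: "x = n \<oplus>\<^bsub>M\<^esub> t \<odot>\<^bsub>M\<^esub> g" "y = n' \<oplus>\<^bsub>M\<^esub> t' \<odot>\<^bsub>M\<^esub> g"
      by (metis plus_cyclicE)
    have "x \<oplus>\<^bsub>M\<^esub> y = (n \<oplus>\<^bsub>M\<^esub> n') \<oplus>\<^bsub>M\<^esub> (t \<oplus> t') \<odot>\<^bsub>M\<^esub> g"
      using nt Nc assms(2) unfolding xy by (simp add: smult_l_distr M.a_ac)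
    then show "x \<oplus>\<^bsub>M\<^esub> y \<in> plus_cyclic R M N g"
      using nt N(5) by (simp add: mem_plus_cyclicI)
  next
    fix a x assume a: "a \<in> carrier R" and "x \<in> plus_cyclic R M N g"
    then obtain n t where nt: "n \<in> N" "t \<in> carrier R" and x: "x = n \<oplus>\<^bsub>M\<^esub> t \<odot>\<^bsub>M\<^esub> g"
      by (metis plus_cyclicE)
    have "a \<odot>\<^bsub>M\<^esub> x = a \<odot>\<^bsub>M\<^esub> n \<oplus>\<^bsub>M\<^esub> (a \<otimes> t) \<odot>\<^bsub>M\<^esub> g"
      using a nt Nc assms(2) unfolding x by (simp add: smult_r_distr smult_assoc1)
    then show "a \<odot>\<^bsub>M\<^esub> x \<in> plus_cyclic R M N g"
      using a nt N(4) by (simp add: mem_plus_cyclicI)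
  qed
qed


lemma smult_ideal_span_singleton:
  assumes "ideal P R" "G \<subseteq> carrier M" "g \<in> carrier M" "submodule N R M" "r \<in> carrier R"
    "\<And>h. h \<in> G \<Longrightarrow> r \<odot>\<^bsub>M\<^esub> h \<in> plus_cyclic R M N g"
    "y \<in> ideal_span M P G N"
  shows "r \<odot>\<^bsub>M\<^esub> y \<in> ideal_span M P {g} N"
  using assms(7)
proof induct
  case (base n)
  then show ?case using submoduleE(4)[OF assms(4) assms(5)] by (blast intro: ideal_span.base)
next
  case (gen b h)
  interpret P: ideal P R by fact
  obtain n t where nt: "n \<in> N" "t \<in> carrier R" and rh: "r \<odot>\<^bsub>M\<^esub> h = n \<oplus>\<^bsub>M\<^esub> t \<odot>\<^bsub>M\<^esub> g"
    using assms(6)[OF gen(2)] by (rule plus_cyclicE)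
  have b: "b \<in> carrier R" using gen(1) P.a_subset by blast
  have n: "n \<in> carrier M" using nt(1) submoduleE(1)[OF assms(4)] by blast
  have "r \<odot>\<^bsub>M\<^esub> (b \<odot>\<^bsub>M\<^esub> h) = b \<odot>\<^bsub>M\<^esub> (r \<odot>\<^bsub>M\<^esub> h)"
    using b assms(2,5) gen(2) by (metis R.m_comm smult_assoc1 subsetD)
  also have "\<dots> = b \<odot>\<^bsub>M\<^esub> n \<oplus>\<^bsub>M\<^esub> (b \<otimes> t) \<odot>\<^bsub>M\<^esub> g"
    using b nt(2) n assms(3) by (simp add: rh smult_r_distr smult_assoc1)
  finally show ?case
    using submoduleE(4)[OF assms(4) b nt(1)] P.I_r_closed[OF gen(1) nt(2)]
    by (simp add: ideal_span.base ideal_span.gen ideal_span.add)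
next
  case (add x y)
  have "x \<in> carrier M" "y \<in> carrier M"
    using add(1,3) ideal_span_subset[OF additive_subgroup.a_subset[OF ideal.axioms(1)[OF assms(1)]] assms(2) submoduleE(1)[OF assms(4)]]
    by blast+
  with add show ?case using assms(5) by (simp add: smult_r_distr ideal_span.add)
qed

lemma smult_plus_cyclic_closed:
  assumes "submodule N R M" "g \<in> carrier M" "u \<in> carrier R" "u \<odot>\<^bsub>M\<^esub> g \<in> N"
    "x \<in> plus_cyclic R M N g"
  shows "u \<odot>\<^bsub>M\<^esub> x \<in> N"
proof -
  note N = submoduleE[OF assms(1)]
  obtain n t where nt: "n \<in> N" "t \<in> carrier R" and x: "x = n \<oplus>\<^bsub>M\<^esub> t \<odot>\<^bsub>M\<^esub> g"
    using assms(5) by (rule plus_cyclicE)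
  have "u \<odot>\<^bsub>M\<^esub> x = u \<odot>\<^bsub>M\<^esub> n \<oplus>\<^bsub>M\<^esub> t \<odot>\<^bsub>M\<^esub> (u \<odot>\<^bsub>M\<^esub> g)"
    using nt N(1) assms(2,3) unfolding x
    by (simp add: smult_r_distr smult_assoc1[symmetric] R.m_comm subsetD)
  then show ?thesis using nt assms(3,4) N(4,5) by simp
qed


lemma nakayama_generator_step:
  assumes "primeideal P R" "G \<subseteq> carrier M" "g \<in> carrier M" "submodule N R M"
    "s \<in> carrier R" "s \<notin> P" "s \<odot>\<^bsub>M\<^esub> g \<in> ideal_span M P (insert g G) N"
    "r \<in> carrier R" "r \<notin> P" "\<And>h. h \<in> G \<Longrightarrow> r \<odot>\<^bsub>M\<^esub> h \<in> plus_cyclic R M N g"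
  obtains u where "u \<in> carrier R" "u \<notin> P" "u \<odot>\<^bsub>M\<^esub> g \<in> N"
proof -
  interpret P: primeideal P R by fact
  have N: "N \<subseteq> carrier M" using submoduleE(1)[OF assms(4)] .
  obtain a y where a: "a \<in> P" and y: "y \<in> ideal_span M P G N"
    and sg: "s \<odot>\<^bsub>M\<^esub> g = a \<odot>\<^bsub>M\<^esub> g \<oplus>\<^bsub>M\<^esub> y"
    using ideal_span_insertE[OF P.is_ideal assms(2-4,7)] .
  have "r \<odot>\<^bsub>M\<^esub> y \<in> ideal_span M P (insert g {}) N"
    using smult_ideal_span_singleton[OF P.is_ideal assms(2-4,8,10) y] by simp
  then obtain c z where c: "c \<in> P" and "z \<in> ideal_span M P {} N"
    and ry: "r \<odot>\<^bsub>M\<^esub> y = c \<odot>\<^bsub>M\<^esub> g \<oplus>\<^bsub>M\<^esub> z"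
    by (rule ideal_span_insertE[OF P.is_ideal empty_subsetI assms(3,4)])
  then have z: "z \<in> N" using ideal_span_empty[OF assms(4)] by blast
  have carr: "a \<in> carrier R" "c \<in> carrier R" "y \<in> carrier M" "z \<in> carrier M"
    using a c y z N P.a_subset ideal_span_subset[OF P.a_subset assms(2) N] by auto
  define u where "u = r \<otimes> s \<ominus> (r \<otimes> a \<oplus> c)"
  have u: "u \<in> carrier R" unfolding u_def using carr assms(5,8) by simp
  have "(r \<otimes> s) \<odot>\<^bsub>M\<^esub> g = r \<odot>\<^bsub>M\<^esub> (a \<odot>\<^bsub>M\<^esub> g \<oplus>\<^bsub>M\<^esub> y)"
    using assms(3,5,8) by (simp add: smult_assoc1 sg)
  also have "\<dots> = (r \<otimes> a) \<odot>\<^bsub>M\<^esub> g \<oplus>\<^bsub>M\<^esub> (c \<odot>\<^bsub>M\<^esub> g \<oplus>\<^bsub>M\<^esub> z)"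
    using carr assms(3,8) by (simp add: smult_r_distr smult_assoc1 ry)
  also have "\<dots> = (r \<otimes> a \<oplus> c) \<odot>\<^bsub>M\<^esub> g \<oplus>\<^bsub>M\<^esub> z"
    using carr assms(3,8) by (simp add: smult_l_distr M.a_assoc)
  finally have rsg: "(r \<otimes> s) \<odot>\<^bsub>M\<^esub> g = (r \<otimes> a \<oplus> c) \<odot>\<^bsub>M\<^esub> g \<oplus>\<^bsub>M\<^esub> z" .
  define w where "w = (r \<otimes> a \<oplus> c) \<odot>\<^bsub>M\<^esub> g"
  have w: "w \<in> carrier M" unfolding w_def using carr assms(3,8) by simp
  have "u \<odot>\<^bsub>M\<^esub> g = (r \<otimes> s) \<odot>\<^bsub>M\<^esub> g \<oplus>\<^bsub>M\<^esub> \<ominus>\<^bsub>M\<^esub> w"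
    unfolding u_def w_def using carr assms(3,5,8) by (simp add: R.minus_eq smult_l_distr smult_l_minus)
  also have "\<dots> = z"
    unfolding rsg w_def[symmetric] using w carr by (simp add: M.a_comm[of w z] M.a_assoc M.r_neg)
  finally have "u \<odot>\<^bsub>M\<^esub> g = z" .
  moreover have "u \<notin> P"
  proof
    assume "u \<in> P"
    moreover have "r \<otimes> a \<oplus> c \<in> P" using a c assms(8) by (simp add: P.I_l_closed P.a_closed)
    ultimately have "u \<oplus> (r \<otimes> a \<oplus> c) \<in> P" by (rule P.a_closed)
    moreover have "u \<oplus> (r \<otimes> a \<oplus> c) = r \<otimes> s"
      using carr assms(5,8) by (simp add: u_def R.minus_eq R.a_assoc R.l_neg)
    ultimately have "r \<otimes> s \<in> P" by simp
    then show False using P.I_prime[OF assms(8,5)] assms(6,9) by blast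
  qed
  ultimately show thesis using that u z by blast
qed


text \<open>The submodule \<open>N\<close> is there for the induction on \<open>G\<close>: removing a generator \<open>g\<close>
  replaces \<open>N\<close> by \<open>N + R g\<close>.\<close>

lemma nakayama_outside_prime:
  assumes "primeideal P R" "finite G" "G \<subseteq> carrier M" "submodule N R M"
    "s \<in> carrier R" "s \<notin> P" "\<And>g. g \<in> G \<Longrightarrow> s \<odot>\<^bsub>M\<^esub> g \<in> ideal_span M P G N"
  shows "\<exists>r\<in>carrier R - P. \<forall>g\<in>G. r \<odot>\<^bsub>M\<^esub> g \<in> N"
  using assms(2-4,7)
proof (induction G arbitrary: N rule: finite_induct)
  case empty
  interpret P: primeideal P R by fact
  have "\<one> \<notin> P" using P.I_notcarr P.one_imp_carrier by blast
  then show ?case by blast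
next
  case (insert g G N)
  interpret P: primeideal P R by fact
  have g: "g \<in> carrier M" and G: "G \<subseteq> carrier M" using insert.prems(1) by auto
  let ?N' = "plus_cyclic R M N g"
  have "s \<odot>\<^bsub>M\<^esub> h \<in> ideal_span M P G ?N'" if "h \<in> G" for h
    using insert.prems(3) that ideal_span_insert_subset[OF P.is_ideal G g insert.prems(2)] by blast
  with insert.IH[OF G submodule_plus_cyclic[OF insert.prems(2) g]]
  obtain r where r: "r \<in> carrier R" "r \<notin> P" and rG: "\<And>h. h \<in> G \<Longrightarrow> r \<odot>\<^bsub>M\<^esub> h \<in> ?N'"
    by blast
  obtain u where u: "u \<in> carrier R" "u \<notin> P" "u \<odot>\<^bsub>M\<^esub> g \<in> N"
    using nakayama_generator_step[OF assms(1) G g insert.prems(2) assms(5,6)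
        insert.prems(3)[OF insertI1] r rG] .
  have "(r \<otimes> u) \<odot>\<^bsub>M\<^esub> g \<in> N"
    using u r g submoduleE(4)[OF insert.prems(2)] by (simp add: smult_assoc1)
  moreover have "(r \<otimes> u) \<odot>\<^bsub>M\<^esub> h \<in> N" if "h \<in> G" for h
  proof -
    have "(r \<otimes> u) \<odot>\<^bsub>M\<^esub> h = u \<odot>\<^bsub>M\<^esub> (r \<odot>\<^bsub>M\<^esub> h)"
      using r(1) u(1) G that by (simp add: R.m_comm[of r u] smult_assoc1 subset_iff)
    then show ?thesis
      using smult_plus_cyclic_closed[OF insert.prems(2) g u(1,3) rG[OF that]] by simp
  qed
  moreover have "r \<otimes> u \<in> carrier R - P" using r u P.I_prime by auto
  ultimately show ?case by blast
qed

lemma common_multiplier_outside_prime: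
  assumes "primeideal P R" "finite G" "\<And>a x. a \<in> carrier R \<Longrightarrow> x \<in> L \<Longrightarrow> a \<odot>\<^bsub>M\<^esub> x \<in> L"
    "\<And>g. g \<in> G \<Longrightarrow> \<exists>s\<in>carrier R - P. s \<odot>\<^bsub>M\<^esub> g \<in> L" "G \<subseteq> carrier M"
  shows "\<exists>s\<in>carrier R - P. \<forall>g\<in>G. s \<odot>\<^bsub>M\<^esub> g \<in> L"
  using assms(2,4,5)
proof (induction G rule: finite_induct)
  case empty
  interpret P: primeideal P R by fact
  have "\<one> \<notin> P" using P.I_notcarr P.one_imp_carrier by blast
  then show ?case by blast
next
  case (insert g G)
  interpret P: primeideal P R by fact
  obtain s where s: "s \<in> carrier R - P" "\<forall>h\<in>G. s \<odot>\<^bsub>M\<^esub> h \<in> L" using insert by auto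
  obtain t where t: "t \<in> carrier R - P" "t \<odot>\<^bsub>M\<^esub> g \<in> L" using insert.prems by blast
  have "(s \<otimes> t) \<odot>\<^bsub>M\<^esub> g \<in> L" using s t insert.prems(2) assms(3) by (simp add: smult_assoc1)
  moreover have "(s \<otimes> t) \<odot>\<^bsub>M\<^esub> h \<in> L" if "h \<in> G" for h
  proof -
    have "(s \<otimes> t) \<odot>\<^bsub>M\<^esub> h = t \<odot>\<^bsub>M\<^esub> (s \<odot>\<^bsub>M\<^esub> h)"
      using s t that insert.prems(2) by (simp add: R.m_comm[of s t] smult_assoc1 subset_iff)
    then show ?thesis using s t that assms(3) by simp
  qed
  moreover have "s \<otimes> t \<in> carrier R - P" using s t P.I_prime by auto
  ultimately show ?case by blast
qed


lemma smult_generated_in_ideal_span: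
  assumes "ideal P R" "p \<in> P" "finite Gs" "Gs \<subseteq> carrier M" "a \<in> Gs \<rightarrow> carrier R"
  shows "p \<odot>\<^bsub>M\<^esub> finsum M (\<lambda>g. a g \<odot>\<^bsub>M\<^esub> g) Gs \<in> ideal_span M P Gs {\<zero>\<^bsub>M\<^esub>}"
proof -
  interpret P: ideal P R by fact
  have p: "p \<in> carrier R" using assms(2) P.a_subset by blast
  have ag: "a g \<in> carrier R" "g \<in> carrier M" if "g \<in> Gs" for g
    using that assms(4,5) by auto
  have "p \<odot>\<^bsub>M\<^esub> finsum M (\<lambda>g. a g \<odot>\<^bsub>M\<^esub> g) Gs = finsum M (\<lambda>g. (p \<otimes> a g) \<odot>\<^bsub>M\<^esub> g) Gs"
    using p ag assms(3) by (subst finsum_smult_ldistr) (auto intro!: M.finsum_cong' simp: smult_assoc1)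
  also have "\<dots> \<in> ideal_span M P Gs {\<zero>\<^bsub>M\<^esub>}"
  proof (rule M.finsum_mem_closed[OF assms(3)])
    show "ideal_span M P Gs {\<zero>\<^bsub>M\<^esub>} \<subseteq> carrier M"
      using ideal_span_subset[OF P.a_subset assms(4)] by simp
  qed (use ag assms(2) in \<open>auto intro: ideal_span.base ideal_span.gen ideal_span.add P.I_r_closed\<close>)
  finally show ?thesis .
qed

lemma annihilated_by_generators:
  assumes "Gs \<subseteq> carrier M" "finite Gs"
    "carrier M = {finsum M (\<lambda>g. a g \<odot>\<^bsub>M\<^esub> g) Gs | a. a \<in> Gs \<rightarrow> carrier R}"
    "r \<in> carrier R" "\<And>g. g \<in> Gs \<Longrightarrow> r \<odot>\<^bsub>M\<^esub> g = \<zero>\<^bsub>M\<^esub>" "m \<in> carrier M"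
  shows "r \<odot>\<^bsub>M\<^esub> m = \<zero>\<^bsub>M\<^esub>"
proof -
  obtain a where a: "a \<in> Gs \<rightarrow> carrier R" and m: "m = finsum M (\<lambda>g. a g \<odot>\<^bsub>M\<^esub> g) Gs"
    using assms(3,6) by blast
  have ag: "a g \<in> carrier R" "g \<in> carrier M" if "g \<in> Gs" for g
    using that a assms(1) by auto
  have "r \<odot>\<^bsub>M\<^esub> m = finsum M (\<lambda>g. a g \<odot>\<^bsub>M\<^esub> (r \<odot>\<^bsub>M\<^esub> g)) Gs"
    unfolding m using ag assms(2,4)
    by (subst finsum_smult_ldistr) (auto intro!: M.finsum_cong' simp: smult_assoc1[symmetric] R.m_comm)
  also have "\<dots> = \<zero>\<^bsub>M\<^esub>"
    using ag assms(5) by (intro M.add.finprod_one_eqI) simp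
  finally show ?thesis .
qed

end

context plain_module
begin

lemma seq_submod_subset_ideal_span:
  assumes "ideal P R" "set xs \<subseteq> P" "finite Gs" "Gs \<subseteq> carrier M"
    "carrier M = {finsum M (\<lambda>g. a g \<odot>\<^bsub>M\<^esub> g) Gs | a. a \<in> Gs \<rightarrow> carrier R}"
  shows "seq_submod R M xs \<subseteq> ideal_span M P Gs {\<zero>\<^bsub>M\<^esub>}"
proof
  interpret P: ideal P R by fact
  fix v assume "v \<in> seq_submod R M xs"
  then obtain m where m: "m \<in> {..<length xs} \<rightarrow> carrier M"
    and v: "v = finsum M (\<lambda>k. (xs ! k) \<odot>\<^bsub>M\<^esub> m k) {..<length xs}"
    by (rule seq_submodE)
  have "(xs ! k) \<odot>\<^bsub>M\<^esub> m k \<in> ideal_span M P Gs {\<zero>\<^bsub>M\<^esub>}" if "k < length xs" for k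
  proof -
    have "m k \<in> carrier M" using m that by auto
    then obtain a where "a \<in> Gs \<rightarrow> carrier R" "m k = finsum M (\<lambda>g. a g \<odot>\<^bsub>M\<^esub> g) Gs"
      using assms(5) by blast
    moreover have "xs ! k \<in> P" using that assms(2) by auto
    ultimately show ?thesis using smult_generated_in_ideal_span[OF assms(1) _ assms(3,4)] by simp
  qed
  then show "v \<in> ideal_span M P Gs {\<zero>\<^bsub>M\<^esub>}"
    unfolding v using ideal_span_subset[OF P.a_subset assms(4)]
    by (intro M.finsum_mem_closed) (auto intro: ideal_span.base ideal_span.add)
qed

lemma fg_module_annihilator_outside_prime:
  assumes "fg_module R M" "primeideal P R" "set xs \<subseteq> P"
    "\<And>m. m \<in> carrier M \<Longrightarrow> \<exists>s\<in>carrier R - P. s \<odot>\<^bsub>M\<^esub> m \<in> seq_submod R M xs"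
  obtains r where "r \<in> carrier R" "r \<notin> P" "\<And>m. m \<in> carrier M \<Longrightarrow> r \<odot>\<^bsub>M\<^esub> m = \<zero>\<^bsub>M\<^esub>"
proof -
  interpret P: primeideal P R by fact
  obtain Gs where Gs: "finite Gs" "Gs \<subseteq> carrier M"
    "carrier M = {finsum M (\<lambda>g. a g \<odot>\<^bsub>M\<^esub> g) Gs | a. a \<in> Gs \<rightarrow> carrier R}"
    using assms(1) unfolding fg_module_def by blast
  have xs: "set xs \<subseteq> carrier R" using assms(3) P.a_subset by blast
  obtain s where s: "s \<in> carrier R - P" and sG: "\<And>g. g \<in> Gs \<Longrightarrow> s \<odot>\<^bsub>M\<^esub> g \<in> seq_submod R M xs"
    using common_multiplier_outside_prime[OF assms(2) Gs(1) smult_in_seq_submod[OF xs]] assms(4) Gs(2)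
    by blast
  have zero: "submodule {\<zero>\<^bsub>M\<^esub>} R M" by (rule submoduleI) auto
  obtain r where r: "r \<in> carrier R - P" and rG: "\<And>g. g \<in> Gs \<Longrightarrow> r \<odot>\<^bsub>M\<^esub> g = \<zero>\<^bsub>M\<^esub>"
    using nakayama_outside_prime[OF assms(2) Gs(1,2) zero, of s] s sG
      seq_submod_subset_ideal_span[OF P.is_ideal assms(3) Gs] by blast
  show thesis
    using that r annihilated_by_generators[OF Gs(2,1,3) _ rG] by blast
qed

end

section \<open>Supports and dimension\<close>

lemma dim_le_0_iff: "dim_le Ps 0 \<longleftrightarrow> (\<forall>P\<in>Ps. \<forall>Q\<in>Ps. \<not> P \<subset> Q)"
proof
  assume dim: "dim_le Ps 0"
  show "\<forall>P\<in>Ps. \<forall>Q\<in>Ps. \<not> P \<subset> Q"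
  proof (intro ballI notI)
    fix P Q assume PQ: "P \<in> Ps" "Q \<in> Ps" "P \<subset> Q"
    define c :: "nat \<Rightarrow> _" where "c i = (if i = 0 then P else Q)" for i
    have "(\<forall>i\<le>1. c i \<in> Ps) \<and> (\<forall>i<1. c i \<subset> c (Suc i))"
      using PQ by (auto simp: c_def)
    with dim have "(1::nat) \<le> 0" unfolding dim_le_def by blast
    then show False by simp
  qed
next
  assume antichain: "\<forall>P\<in>Ps. \<forall>Q\<in>Ps. \<not> P \<subset> Q"
  show "dim_le Ps 0" unfolding dim_le_def
  proof (intro allI impI)
    fix c :: "nat \<Rightarrow> _" and n assume c: "(\<forall>i\<le>n. c i \<in> Ps) \<and> (\<forall>i<n. c i \<subset> c (Suc i))"
    show "n \<le> 0"
    proof (rule ccontr)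
      assume "\<not> n \<le> 0"
      with c have "c 0 \<in> Ps" "c 1 \<in> Ps" "c 0 \<subset> c 1" by auto
      with antichain show False by blast
    qed
  qed
qed

lemma dim_le_0_Un_upward_closed:
  assumes "A \<subseteq> C" "B \<subseteq> C" "C \<subseteq> A \<union> B"
    "\<And>P Q. P \<in> A \<Longrightarrow> Q \<in> C \<Longrightarrow> P \<subseteq> Q \<Longrightarrow> Q \<in> A"
    "\<And>P Q. P \<in> B \<Longrightarrow> Q \<in> C \<Longrightarrow> P \<subseteq> Q \<Longrightarrow> Q \<in> B"
  shows "dim_le C 0 \<longleftrightarrow> dim_le A 0 \<and> dim_le B 0"
  unfolding dim_le_0_iff
proof (intro iffI conjI ballI notI)
  fix P Q assume "\<forall>P\<in>C. \<forall>Q\<in>C. \<not> P \<subset> Q"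
  then show "P \<in> A \<Longrightarrow> Q \<in> A \<Longrightarrow> P \<subset> Q \<Longrightarrow> False" "P \<in> B \<Longrightarrow> Q \<in> B \<Longrightarrow> P \<subset> Q \<Longrightarrow> False"
    using assms(1,2) by blast+
next
  fix P Q assume anti: "(\<forall>P\<in>A. \<forall>Q\<in>A. \<not> P \<subset> Q) \<and> (\<forall>P\<in>B. \<forall>Q\<in>B. \<not> P \<subset> Q)"
    and PQ: "P \<in> C" "Q \<in> C" "P \<subset> Q"
  show False
  proof (cases "P \<in> A")
    case True
    with anti PQ assms(4)[OF True PQ(2)] show False by blast
  next
    case False
    with PQ(1) assms(3) have "P \<in> B" by blast
    with anti PQ assms(5)[OF this PQ(2)] show False by blast
  qed
qed

lemma supp_pp_quotD:
  assumes "P \<in> supp_pp_quot S SG F N"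
  shows "primeideal P S" and "\<exists>m\<in>carrier F. \<forall>s\<in>carrier S - P. s \<odot>\<^bsub>F\<^esub> m \<notin> N"
  using assms unfolding supp_pp_quot_def by auto

lemma mem_supp_pp_quot_iff:
  assumes "P \<in> supp_pp_quot S SG F N"
  shows "P \<in> supp_pp_quot S SG F' N' \<longleftrightarrow> (\<exists>m\<in>carrier F'. \<forall>s\<in>carrier S - P. s \<odot>\<^bsub>F'\<^esub> m \<notin> N')"
  using assms unfolding supp_pp_quot_def by blast

lemma supp_pp_quot_upward_closed:
  assumes "P \<in> supp_pp_quot S SG F N" "Q \<in> supp_pp_quot S SG F' N'" "P \<subseteq> Q"
  shows "Q \<in> supp_pp_quot S SG F N"
  using supp_pp_quotD(2)[OF assms(1)] assms(3) mem_supp_pp_quot_iff[OF assms(2)] by blast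

context linear_map
begin

lemma supp_pp_quot_subset_of_surj:
  assumes "h ` carrier M = carrier N" "set xs \<subseteq> carrier R"
  shows "supp_pp_quot R SG N (seq_submod R N xs) \<subseteq> supp_pp_quot R SG M (seq_submod R M xs)"
proof
  fix P assume P: "P \<in> supp_pp_quot R SG N (seq_submod R N xs)"
  obtain n where n: "n \<in> carrier N" and n_P: "\<And>s. s \<in> carrier R - P \<Longrightarrow> s \<odot>\<^bsub>N\<^esub> n \<notin> seq_submod R N xs"
    using supp_pp_quotD(2)[OF P] by blast
  from n assms(1) obtain m where m: "m \<in> carrier M" "h m = n" by (metis imageE)
  have "s \<odot>\<^bsub>M\<^esub> m \<notin> seq_submod R M xs" if s: "s \<in> carrier R - P" for s
  proof
    assume "s \<odot>\<^bsub>M\<^esub> m \<in> seq_submod R M xs"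
    then have "h (s \<odot>\<^bsub>M\<^esub> m) \<in> seq_submod R N xs"
      using image_seq_submod_subset[OF assms(2)] by blast
    moreover have "h (s \<odot>\<^bsub>M\<^esub> m) = s \<odot>\<^bsub>N\<^esub> n" using s m by (simp add: map_smult)
    ultimately show False using n_P[OF s] by simp
  qed
  then show "P \<in> supp_pp_quot R SG M (seq_submod R M xs)"
    using mem_supp_pp_quot_iff[OF P] m(1) by blast
qed

lemma supp_pp_quot_subset_of_inj:
  assumes "inj_on h (carrier M)" "fg_module R N" "set xs \<subseteq> carrier R"
  shows "supp_pp_quot R SG M (seq_submod R M xs) \<subseteq> supp_pp_quot R SG N (seq_submod R N xs)"
proof
  fix P assume P: "P \<in> supp_pp_quot R SG M (seq_submod R M xs)"
  then interpret P: primeideal P R by (rule supp_pp_quotD(1))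
  obtain m where m: "m \<in> carrier M" and m_P: "\<And>s. s \<in> carrier R - P \<Longrightarrow> s \<odot>\<^bsub>M\<^esub> m \<notin> seq_submod R M xs"
    using supp_pp_quotD(2)[OF P] by blast
  have xs_P: "set xs \<subseteq> P"
  proof
    fix x assume "x \<in> set xs"
    then obtain i where "i < length xs" "x = xs ! i" by (metis in_set_conv_nth)
    then have "x \<odot>\<^bsub>M\<^esub> m \<in> seq_submod R M xs"
      using M.nth_smult_in_seq_submod[OF assms(3) _ m] by simp
    with m_P \<open>x \<in> set xs\<close> assms(3) show "x \<in> P" by blast
  qed
  show "P \<in> supp_pp_quot R SG N (seq_submod R N xs)"
  proof (rule ccontr)
    assume "P \<notin> supp_pp_quot R SG N (seq_submod R N xs)"
    then have "\<exists>s\<in>carrier R - P. s \<odot>\<^bsub>N\<^esub> n \<in> seq_submod R N xs" if "n \<in> carrier N" for n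
      using that mem_supp_pp_quot_iff[OF P] by blast
    then obtain r where r: "r \<in> carrier R" "r \<notin> P" and ann: "\<And>n. n \<in> carrier N \<Longrightarrow> r \<odot>\<^bsub>N\<^esub> n = \<zero>\<^bsub>N\<^esub>"
      using N.fg_module_annihilator_outside_prime[OF assms(2) P.primeideal_axioms xs_P] by blast
    have "h (r \<odot>\<^bsub>M\<^esub> m) = h \<zero>\<^bsub>M\<^esub>"
      using r m ann map_in_carrier by (simp add: map_smult map_zero)
    then have "r \<odot>\<^bsub>M\<^esub> m = \<zero>\<^bsub>M\<^esub>" using assms(1) r m by (simp add: inj_on_eq_iff)
    with M.zero_in_seq_submod[OF assms(3)] m_P[of r] r show False by simp
  qed
qed

end

lemma supp_pp_quot_subset_of_short_exact:
  assumes "linear_map R M1 M f" "linear_map R M M2 g" "short_exact M1 M M2 f g" "set xs \<subseteq> carrier R"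
  shows "supp_pp_quot R SG M (seq_submod R M xs)
    \<subseteq> supp_pp_quot R SG M1 (seq_submod R M1 xs) \<union> supp_pp_quot R SG M2 (seq_submod R M2 xs)"
proof
  interpret M: plain_module R M using assms(2) unfolding linear_map_def by blast
  interpret M2: plain_module R M2 using assms(2) unfolding linear_map_def by blast
  interpret f: linear_map R M1 M f by fact
  interpret g: linear_map R M M2 g by fact
  fix P assume P: "P \<in> supp_pp_quot R SG M (seq_submod R M xs)"
  then interpret P: primeideal P R by (rule supp_pp_quotD(1))
  obtain m where m: "m \<in> carrier M" and m_P: "\<And>s. s \<in> carrier R - P \<Longrightarrow> s \<odot>\<^bsub>M\<^esub> m \<notin> seq_submod R M xs"
    using supp_pp_quotD(2)[OF P] by blast
  have surj: "g ` carrier M = carrier M2" and ker: "f ` carrier M1 = {y \<in> carrier M. g y = \<zero>\<^bsub>M2\<^esub>}"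
    using assms(3) unfolding short_exact_def by auto
  show "P \<in> supp_pp_quot R SG M1 (seq_submod R M1 xs) \<union> supp_pp_quot R SG M2 (seq_submod R M2 xs)"
  proof (rule ccontr)
    assume "\<not> ?thesis"
    then have M1: "\<And>n. n \<in> carrier M1 \<Longrightarrow> \<exists>t\<in>carrier R - P. t \<odot>\<^bsub>M1\<^esub> n \<in> seq_submod R M1 xs"
      and M2: "\<And>n. n \<in> carrier M2 \<Longrightarrow> \<exists>s\<in>carrier R - P. s \<odot>\<^bsub>M2\<^esub> n \<in> seq_submod R M2 xs"
      using mem_supp_pp_quot_iff[OF P] by blast+
    obtain s where s: "s \<in> carrier R - P" and "s \<odot>\<^bsub>M2\<^esub> g m \<in> seq_submod R M2 xs"
      using M2[OF g.map_in_carrier[OF m]] by blast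
    then have "s \<odot>\<^bsub>M2\<^esub> g m \<in> g ` seq_submod R M xs"
      using g.image_seq_submod[OF assms(4) surj] by simp
    then obtain z where z: "z \<in> seq_submod R M xs" and gz: "g z = s \<odot>\<^bsub>M2\<^esub> g m"
      by (metis imageE)
    have zM: "z \<in> carrier M" using z M.seq_submod_subset[OF assms(4)] by blast
    define w where "w = s \<odot>\<^bsub>M\<^esub> m \<ominus>\<^bsub>M\<^esub> z"
    have w: "w \<in> carrier M" unfolding w_def using s m zM by simp
    have gw: "g w = \<zero>\<^bsub>M2\<^esub>"
      unfolding w_def using s m zM gz
      by (simp add: M.minus_eq g.map_add g.map_neg g.map_smult M2.r_neg g.map_in_carrier)
    have "w \<in> f ` carrier M1" using w gw ker by simp
    then obtain n where n: "n \<in> carrier M1" "w = f n" by blast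
    then obtain t where t: "t \<in> carrier R - P" and "t \<odot>\<^bsub>M1\<^esub> n \<in> seq_submod R M1 xs"
      using M1 by blast
    then have "f (t \<odot>\<^bsub>M1\<^esub> n) \<in> seq_submod R M xs"
      using f.image_seq_submod_subset[OF assms(4)] by blast
    then have tw: "t \<odot>\<^bsub>M\<^esub> w \<in> seq_submod R M xs"
      using t n by (simp add: f.map_smult)
    have "s \<odot>\<^bsub>M\<^esub> m = w \<oplus>\<^bsub>M\<^esub> z"
      unfolding w_def using s m zM by (simp add: M.minus_eq M.a_assoc M.l_neg)
    then have "(t \<otimes>\<^bsub>R\<^esub> s) \<odot>\<^bsub>M\<^esub> m = t \<odot>\<^bsub>M\<^esub> w \<oplus>\<^bsub>M\<^esub> t \<odot>\<^bsub>M\<^esub> z"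
      using t s m w zM by (simp add: M.smult_assoc1 M.smult_r_distr)
    also have "\<dots> \<in> seq_submod R M xs"
      using M.add_in_seq_submod[OF assms(4) tw M.smult_in_seq_submod[OF assms(4) _ z]] t by blast
    finally have "(t \<otimes>\<^bsub>R\<^esub> s) \<odot>\<^bsub>M\<^esub> m \<in> seq_submod R M xs" .
    moreover have "t \<otimes>\<^bsub>R\<^esub> s \<in> carrier R - P" using t s P.I_prime by blast
    ultimately show False using m_P by blast
  qed
qed

theorem lemma3p4:
  fixes S :: "'a ring" and SG :: "('d::finite \<Rightarrow> nat) \<Rightarrow> 'a set"
    and M1 :: "('a, 'b) module" and M1G :: "('d \<Rightarrow> nat) \<Rightarrow> 'b set"
    and M :: "('a, 'c) module" and MG :: "('d \<Rightarrow> nat) \<Rightarrow> 'c set"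
    and M2 :: "('a, 'e) module" and M2G :: "('d \<Rightarrow> nat) \<Rightarrow> 'e set"
    and f :: "'b \<Rightarrow> 'c" and g :: "'c \<Rightarrow> 'e"
    and xs :: "'a list"
  assumes "standard_graded S SG" and "fg_algebra_over_deg0 S SG"
    and "artinian (deg0_ring S SG)" and "local_ring (deg0_ring S SG)"
    and "infinite_residue_field (deg0_ring S SG)"
    and "graded_module S SG M1 M1G" and "fg_module S M1"
    and "graded_module S SG M MG" and "fg_module S M"
    and "graded_module S SG M2 M2G" and "fg_module S M2"
    and "graded_hom S M1 M1G M MG f" and "graded_hom S M MG M2 M2G g"
    and "short_exact M1 M M2 f g"
    and "set xs \<subseteq> (\<Union>i. SG (unitdeg i))"
  shows "mm_system S SG M xs \<longleftrightarrow> (mm_system S SG M1 xs \<and> mm_system S SG M2 xs)"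
proof -
  have modules: "module S M1" "module S M" "module S M2"
    using assms(6,8,10) unfolding graded_module_def by auto
  interpret f: linear_map S M1 M f
    using graded_hom_imp_linear_map[OF assms(12) modules(1,2)] .
  interpret g: linear_map S M M2 g
    using graded_hom_imp_linear_map[OF assms(13) modules(2,3)] .
  have "SG n \<subseteq> carrier S" for n
    using assms(1) unfolding standard_graded_def graded_ring_def graded_decomp_def
    by (meson additive_subgroup.a_subset)
  then have xs: "set xs \<subseteq> carrier S" using assms(15) by blast
  have inj: "inj_on f (carrier M1)" and surj: "g ` carrier M = carrier M2"
    using assms(14) unfolding short_exact_def by auto
  show ?thesis
    unfolding mm_system_def
  proof (rule dim_le_0_Un_upward_closed)
    show "supp_pp_quot S SG M (seq_submod S M xs)
        \<subseteq> supp_pp_quot S SG M1 (seq_submod S M1 xs) \<union> supp_pp_quot S SG M2 (seq_submod S M2 xs)"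
      by (rule supp_pp_quot_subset_of_short_exact[OF f.linear_map_axioms g.linear_map_axioms assms(14) xs])
  qed (use f.supp_pp_quot_subset_of_inj[OF inj assms(9) xs]
        g.supp_pp_quot_subset_of_surj[OF surj xs] supp_pp_quot_upward_closed in blast)+
qed

end
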